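(* Let $A\in\mathcal{CP}_n$ have a unique CP representation $A=\sum_{i=1}^k\mathbf b_i\mathbf b_i^T$ (with $\mathbf b_i\in\mathbb R^n_+$). Then the minimal face of $\mathcal{CP}_n$ containing $A$ is the polyhedral cone \[\mathcal F^A_{\mathcal{CP}_n}=\operatorname{cone}\{\mathbf b_i\mathbf b_i^T : 1\le i\le k\}.\]
   Context: A symmetric $n\times n$ matrix $A$ is completely positive if $A=BB^T$ for some entrywise nonnegative matrix $B$; $\mathcal{CP}_n$ is the convex cone of $n\times n$ completely positive matrices. A CP representation of $A$ is an expression $A=\sum_{i=1}^k\mathbf b_i\mathbf b_i^T$ with $\mathbf b_i\ge\mathbf 0$ (equivalently a CP factorization $A=BB^T$ with columns $\mathbf b_i$); only representations with pairwise linearly independent $\mathbf b_i$ are considered, and representations differing only in the order of the summands are considered equal. A subcone $\mathcal F$ of a convex cone $\mathcal K$ is a face if $X,Y\in\mathcal K$ and $X+Y\in\mathcal F$ imply $X,Y\in\mathcal F$. The minimal face containing $A$ is the intersection of all faces of $\mathcal{CP}_n$ containing $A$. $\operatorname{cone}S$ denotes the set of all finite nonnegative linear combinations of elements of $S$. *)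

theory Defs
  imports "HOL-Analysis.Analysis"
begin

definition outer :: "real^'n \<Rightarrow> real^'n^'n" where
  "outer b = (\<chi> i j. b $ i * b $ j)"

definition nonneg_vec :: "real^'n \<Rightarrow> bool" where
  "nonneg_vec b \<longleftrightarrow> (\<forall>i. 0 \<le> b $ i)"

text \<open>Completely positive cone: A = B B^T with B entrywise nonnegative,
  i.e. A is a finite sum of b b^T over the (nonnegative) columns b of B.\<close>
definition CP_cone :: "(real^'n^'n) set" where
  "CP_cone = {A. \<exists>(k::nat) (bs :: nat \<Rightarrow> real^'n).
      (\<forall>i<k. nonneg_vec (bs i)) \<and> A = (\<Sum>i<k. outer (bs i))}"

text \<open>A CP representation, taken up to order of summands (hence a set of
  vectors), with pairwise linearly independent nonnegative vectors.\<close>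
definition is_CP_rep :: "real^'n^'n \<Rightarrow> (real^'n) set \<Rightarrow> bool" where
  "is_CP_rep A S \<longleftrightarrow> finite S \<and> (\<forall>b\<in>S. nonneg_vec b)
     \<and> (\<forall>b\<in>S. \<forall>c\<in>S. b \<noteq> c \<longrightarrow> independent {b, c})
     \<and> A = (\<Sum>b\<in>S. outer b)"

definition cone_face :: "'a::real_vector set \<Rightarrow> 'a set \<Rightarrow> bool" where
  "cone_face F K \<longleftrightarrow> F \<subseteq> K \<and> convex_cone F \<and>
     (\<forall>X\<in>K. \<forall>Y\<in>K. X + Y \<in> F \<longrightarrow> X \<in> F \<and> Y \<in> F)"

definition minimal_face :: "'a::real_vector set \<Rightarrow> 'a \<Rightarrow> 'a set" where
  "minimal_face K A = \<Inter>{F. cone_face F K \<and> A \<in> F}"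

definition cone_gen :: "'a::real_vector set \<Rightarrow> 'a set" where
  "cone_gen T = {x. \<exists>U c. finite U \<and> U \<subseteq> T \<and> (\<forall>u\<in>U. 0 \<le> c u)
      \<and> x = (\<Sum>u\<in>U. c u *\<^sub>R u)}"

end

theory Submission
  imports Defs
begin

text \<open>
  If \<open>X, Y\<close> are CP and \<open>X + Y = \<Sum> d\<^sub>b b b\<^sup>T\<close> with \<open>b \<in> S\<close>, then \<open>A - X/m\<close> is CP for
  \<open>m \<ge> max d\<^sub>b\<close>. Any CP matrix below \<open>A\<close> lies in \<open>cone {b b\<^sup>T}\<close>: for each column \<open>x\<close> of
  it, adding up \<open>x x\<^sup>T\<close> and a CP factorization of \<open>A - x x\<^sup>T\<close> one summand at a time, and merging
  summands on a common ray into a single vector, yields a CP representation of \<open>A\<close> with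
  \<open>x\<close> on one of its rays. By uniqueness this representation is \<open>S\<close>. So \<open>cone {b b\<^sup>T}\<close> is a
  face; it lies in every face through \<open>A\<close> because each \<open>b b\<^sup>T\<close> is a CP summand of \<open>A\<close>.
\<close>

lemma outer_scaleR: "outer (c *\<^sub>R v) = c\<^sup>2 *\<^sub>R outer v"
  by (simp add: outer_def vec_eq_iff power2_eq_square algebra_simps)

lemma outer_zero [simp]: "outer 0 = 0"
  by (simp add: outer_def vec_eq_iff)

lemma nonneg_vec_scaleR: "nonneg_vec v \<Longrightarrow> 0 \<le> c \<Longrightarrow> nonneg_vec (c *\<^sub>R v)"
  by (simp add: nonneg_vec_def)

lemma convex_cone_sum:
  assumes "convex_cone K" "\<And>i. i \<in> I \<Longrightarrow> f i \<in> K"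
  shows "sum f I \<in> K"
proof (cases "finite I")
  case True
  then show ?thesis using assms(2)
    by (induction I rule: finite_induct)
       (auto intro: convex_cone_add[OF assms(1)] convex_cone_contains_0[OF assms(1)])
qed (simp add: convex_cone_contains_0[OF assms(1)])

lemma cone_gen_inc: "x \<in> T \<Longrightarrow> x \<in> cone_gen T"
  unfolding cone_gen_def by (intro CollectI exI[of _ "{x}"] exI[of _ "\<lambda>_. 1"]) simp

lemma convex_cone_cone_gen: "convex_cone (cone_gen T)"
  unfolding convex_cone_iff
proof (intro conjI ballI allI impI)
  show "0 \<in> cone_gen T"
    unfolding cone_gen_def by (intro CollectI exI[of _ "{}"]) simp
next
  fix x y assume "x \<in> cone_gen T" "y \<in> cone_gen T"
  then obtain U c V e where
    U: "finite U" "U \<subseteq> T" "\<forall>u\<in>U. 0 \<le> c u" "x = (\<Sum>u\<in>U. c u *\<^sub>R u)" and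
    V: "finite V" "V \<subseteq> T" "\<forall>u\<in>V. 0 \<le> e u" "y = (\<Sum>u\<in>V. e u *\<^sub>R u)"
    unfolding cone_gen_def by auto
  define c' where "c' u = (if u \<in> U then c u else 0)" for u
  define e' where "e' u = (if u \<in> V then e u else 0)" for u
  have "(\<Sum>u\<in>U \<union> V. c' u *\<^sub>R u) = x"
    unfolding U(4) c'_def using U(1) V(1) by (intro sum.mono_neutral_cong_right) auto
  moreover have "(\<Sum>u\<in>U \<union> V. e' u *\<^sub>R u) = y"
    unfolding V(4) e'_def using U(1) V(1) by (intro sum.mono_neutral_cong_right) auto
  ultimately have "x + y = (\<Sum>u\<in>U \<union> V. (c' u + e' u) *\<^sub>R u)"
    by (simp add: scaleR_add_left sum.distrib)
  moreover have "\<forall>u\<in>U \<union> V. 0 \<le> c' u + e' u"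
    using U(3) V(3) by (auto simp: c'_def e'_def)
  ultimately show "x + y \<in> cone_gen T"
    unfolding cone_gen_def using U(1,2) V(1,2)
    by (intro CollectI exI[of _ "U \<union> V"] exI[of _ "\<lambda>u. c' u + e' u"]) auto
next
  fix x and a :: real assume "x \<in> cone_gen T" "0 \<le> a"
  then obtain U c where "finite U" "U \<subseteq> T" "\<forall>u\<in>U. 0 \<le> c u" "x = (\<Sum>u\<in>U. c u *\<^sub>R u)"
    unfolding cone_gen_def by auto
  moreover have "a *\<^sub>R x = (\<Sum>u\<in>U. (a * c u) *\<^sub>R u)"
    using calculation(4) by (simp add: scaleR_sum_right)
  ultimately show "a *\<^sub>R x \<in> cone_gen T"
    unfolding cone_gen_def using \<open>0 \<le> a\<close> by (intro CollectI exI[of _ U] exI[of _ "\<lambda>u. a * c u"]) auto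
qed

lemma cone_gen_subset:
  assumes "convex_cone K" "T \<subseteq> K"
  shows "cone_gen T \<subseteq> K"
  unfolding cone_gen_def
  using assms by (auto intro!: convex_cone_sum convex_cone_scaleR)

lemma cone_gen_image_finiteE:
  assumes "finite S" "x \<in> cone_gen (f ` S)"
  obtains d where "\<forall>s\<in>S. 0 \<le> d s" "x = (\<Sum>s\<in>S. d s *\<^sub>R f s)"
proof -
  obtain U c where U: "U \<subseteq> f ` S" "\<forall>u\<in>U. 0 \<le> c u" "x = (\<Sum>u\<in>U. c u *\<^sub>R u)"
    using assms(2) unfolding cone_gen_def by auto
  obtain S' where S': "S' \<subseteq> S" "U = f ` S'" "inj_on f S'"
    using U(1) subset_image_inj by metis
  define d where "d s = (if s \<in> S' then c (f s) else 0)" for s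
  have "x = (\<Sum>s\<in>S'. c (f s) *\<^sub>R f s)"
    using U(3) S'(2,3) by (simp add: sum.reindex)
  also have "\<dots> = (\<Sum>s\<in>S. d s *\<^sub>R f s)"
    using S'(1) assms(1) by (intro sum.mono_neutral_cong_left) (auto simp: d_def)
  moreover have "\<forall>s\<in>S. 0 \<le> d s"
    using U(2) S'(2) by (auto simp: d_def)
  ultimately show thesis
    using that by blast
qed

lemma CP_coneE:
  fixes A :: "real^'n^'n"
  assumes "A \<in> CP_cone"
  obtains k and bs :: "nat \<Rightarrow> real^'n"
  where "\<forall>i<k. nonneg_vec (bs i)" "A = (\<Sum>i<k. outer (bs i))"
  using assms that unfolding CP_cone_def by blast

lemma CP_cone_add_outer:
  assumes "A \<in> CP_cone" "nonneg_vec v"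
  shows "A + outer v \<in> CP_cone"
proof -
  obtain k :: nat and bs where "\<forall>i<k. nonneg_vec (bs i)" "A = (\<Sum>i<k. outer (bs i))"
    using assms(1) by (rule CP_coneE)
  then have "\<forall>i<Suc k. nonneg_vec ((bs(k := v)) i)"
    "A + outer v = (\<Sum>i<Suc k. outer ((bs(k := v)) i))"
    using assms(2) by auto
  then show ?thesis
    unfolding CP_cone_def by blast
qed

lemma outer_in_CP_cone: "nonneg_vec v \<Longrightarrow> outer v \<in> CP_cone"
  unfolding CP_cone_def by (intro CollectI exI[of _ 1] exI[of _ "\<lambda>_. v"]) simp

lemma convex_cone_CP_cone: "convex_cone (CP_cone :: (real^'n^'n) set)"
  unfolding convex_cone_iff
proof (intro conjI ballI allI impI)
  show "0 \<in> CP_cone"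
    unfolding CP_cone_def by (intro CollectI exI[of _ 0]) simp
next
  fix A B :: "real^'n^'n" assume A: "A \<in> CP_cone" and B: "B \<in> CP_cone"
  from B obtain k :: nat and bs where bs: "\<forall>i<k. nonneg_vec (bs i)" "B = (\<Sum>i<k. outer (bs i))"
    by (rule CP_coneE)
  have "A + (\<Sum>i<j. outer (bs i)) \<in> CP_cone" if "j \<le> k" for j
    using that
  proof (induction j)
    case (Suc j)
    then have "A + (\<Sum>i<j. outer (bs i)) + outer (bs j) \<in> CP_cone"
      using bs(1) by (intro CP_cone_add_outer) auto
    then show ?case by (simp add: algebra_simps)
  qed (simp add: A)
  then show "A + B \<in> CP_cone"
    using bs(2) by simp
next
  fix A :: "real^'n^'n" and c :: real assume A: "A \<in> CP_cone" and "0 \<le> c"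
  from A obtain k :: nat and bs where "\<forall>i<k. nonneg_vec (bs i)" "A = (\<Sum>i<k. outer (bs i))"
    by (rule CP_coneE)
  moreover have "c *\<^sub>R A = (\<Sum>i<k. outer (sqrt c *\<^sub>R bs i))"
    using calculation(2) \<open>0 \<le> c\<close> by (simp add: outer_scaleR scaleR_sum_right)
  ultimately show "c *\<^sub>R A \<in> CP_cone"
    unfolding CP_cone_def using \<open>0 \<le> c\<close>
    by (intro CollectI exI[of _ k] exI[of _ "\<lambda>i. sqrt c *\<^sub>R bs i"]) (auto intro: nonneg_vec_scaleR)
qed

lemma nonneg_vec_eq_nonpos_multiple:
  assumes "nonneg_vec a" "nonneg_vec b" "a = k *\<^sub>R b" "k \<le> 0"
  shows "a = 0"
proof -
  have "a $ i = 0" for i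
  proof -
    have "0 \<le> a $ i" "0 \<le> b $ i" "a $ i = k * b $ i"
      using assms(1-3) by (auto simp: nonneg_vec_def)
    with assms(4) show ?thesis
      by (metis antisym mult_nonpos_nonneg)
  qed
  then show ?thesis
    by (simp add: vec_eq_iff)
qed

lemma independent_pair_nonneg_iff:
  fixes a b :: "real^'n"
  assumes "nonneg_vec a" "nonneg_vec b" "a \<noteq> 0" "b \<noteq> 0" "a \<noteq> b"
  shows "independent {a, b} \<longleftrightarrow> (\<forall>r>0. a \<noteq> r *\<^sub>R b)"
proof -
  have "independent {a, b} \<longleftrightarrow> (\<forall>k. a \<noteq> k *\<^sub>R b)"
    using assms(4,5) by (auto simp: independent_insert span_singleton)
  also have "\<dots> \<longleftrightarrow> (\<forall>r>0. a \<noteq> r *\<^sub>R b)"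
    using nonneg_vec_eq_nonpos_multiple[OF assms(1,2)] assms(3) by (metis not_less)
  finally show ?thesis .
qed

lemma is_CP_rep_insert:
  assumes rep: "is_CP_rep M T" and "0 \<notin> T" "nonneg_vec u" "u \<noteq> 0"
    and new_ray: "\<forall>t\<in>T. \<forall>r>0. u \<noteq> r *\<^sub>R t"
  shows "is_CP_rep (M + outer u) (insert u T)"
proof -
  have "u \<notin> T"
    using new_ray by (metis scaleR_one zero_less_one)
  have "independent {u, t}" if "t \<in> T" for t
    using that rep assms(2-4) new_ray \<open>u \<notin> T\<close>
    by (subst independent_pair_nonneg_iff) (auto simp: is_CP_rep_def)
  then show ?thesis
    using rep assms(3) \<open>u \<notin> T\<close> by (auto simp: is_CP_rep_def insert_commute add.commute)
qed

lemma is_CP_rep_Diff: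
  "is_CP_rep M T \<Longrightarrow> t \<in> T \<Longrightarrow> is_CP_rep (M - outer t) (T - {t})"
  by (auto simp: is_CP_rep_def sum_diff1)

lemma CP_rep_add_outer:
  assumes rep: "is_CP_rep M T" and "0 \<notin> T" "nonneg_vec v"
  shows "\<exists>T'. is_CP_rep (M + outer v) T' \<and> 0 \<notin> T' \<and> T \<subseteq> cone hull T'"
proof -
  consider "v = 0" | t r where "t \<in> T" "r > 0" "v = r *\<^sub>R t"
    | "v \<noteq> 0" "\<forall>t\<in>T. \<forall>r>0. v \<noteq> r *\<^sub>R t"
    by blast
  then show ?thesis
  proof cases
    case 1
    then show ?thesis
      using assms hull_subset[of T cone] by auto
  next
    case 2
    \<comment> \<open>v lies on the ray of t: replace t by s t, where s^2 = 1 + r^2\<close>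
    define s where "s = sqrt (1 + r\<^sup>2)"
    have "s > 0" "s\<^sup>2 = 1 + r\<^sup>2"
      by (simp_all add: s_def add_pos_nonneg)
    have "t \<noteq> 0" "nonneg_vec t"
      using 2(1) assms(2) rep by (auto simp: is_CP_rep_def)
    have new_ray: "\<forall>y\<in>T - {t}. \<forall>\<rho>>0. s *\<^sub>R t \<noteq> \<rho> *\<^sub>R y"
    proof (intro ballI allI impI notI)
      fix y \<rho> assume y: "y \<in> T - {t}" and "\<rho> > 0" and eq: "s *\<^sub>R t = \<rho> *\<^sub>R y"
      have "(\<rho> / s) *\<^sub>R y = (1 / s) *\<^sub>R (s *\<^sub>R t)"
        unfolding eq by simp
      then have "t = (\<rho> / s) *\<^sub>R y" "\<rho> / s > 0"
        using \<open>s > 0\<close> \<open>\<rho> > 0\<close> by simp_all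
      moreover have "independent {t, y}" "nonneg_vec y" "y \<noteq> 0"
        using rep y 2(1) assms(2) by (auto simp: is_CP_rep_def)
      ultimately show False
        using independent_pair_nonneg_iff[of t y] \<open>t \<noteq> 0\<close> \<open>nonneg_vec t\<close> y by auto
    qed
    have "is_CP_rep (M - outer t + outer (s *\<^sub>R t)) (insert (s *\<^sub>R t) (T - {t}))"
      using is_CP_rep_Diff[OF rep 2(1)] new_ray \<open>s > 0\<close> \<open>t \<noteq> 0\<close> \<open>nonneg_vec t\<close> assms(2)
      by (intro is_CP_rep_insert) (auto intro: nonneg_vec_scaleR)
    moreover have "M - outer t + outer (s *\<^sub>R t) = M + outer v"
      using \<open>s\<^sup>2 = 1 + r\<^sup>2\<close> 2(3) by (simp add: outer_scaleR algebra_simps)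
    moreover have "t \<in> cone hull insert (s *\<^sub>R t) (T - {t})"
      using mem_cone_hull[of "s *\<^sub>R t" _ "1 / s"] \<open>s > 0\<close> by simp
    ultimately show ?thesis
      using assms(2) \<open>s > 0\<close> \<open>t \<noteq> 0\<close>
      by (intro exI[of _ "insert (s *\<^sub>R t) (T - {t})"]) (auto intro: hull_inc)
  next
    case 3
    then show ?thesis
      using is_CP_rep_insert[OF assms 3] assms(2) by (auto intro: hull_inc)
  qed
qed

lemma CP_rep_add_CP_cone:
  assumes rep: "is_CP_rep M T" and "0 \<notin> T" and N: "N \<in> CP_cone"
  shows "\<exists>T'. is_CP_rep (M + N) T' \<and> 0 \<notin> T' \<and> T \<subseteq> cone hull T'"
proof -
  obtain k :: nat and bs where bs: "\<forall>i<k. nonneg_vec (bs i)" "N = (\<Sum>i<k. outer (bs i))"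
    using N by (rule CP_coneE)
  have "\<exists>T'. is_CP_rep (M + (\<Sum>i<j. outer (bs i))) T' \<and> 0 \<notin> T' \<and> T \<subseteq> cone hull T'"
    if "j \<le> k" for j
    using that
  proof (induction j)
    case 0
    then show ?case
      using assms(1,2) hull_subset[of T cone] by auto
  next
    case (Suc j)
    then obtain T1 where T1: "is_CP_rep (M + (\<Sum>i<j. outer (bs i))) T1" "0 \<notin> T1"
        "T \<subseteq> cone hull T1"
      by auto
    have "nonneg_vec (bs j)"
      using bs(1) Suc.prems by simp
    then obtain T2 where T2: "is_CP_rep (M + (\<Sum>i<j. outer (bs i)) + outer (bs j)) T2"
        "0 \<notin> T2" "T1 \<subseteq> cone hull T2"
      using CP_rep_add_outer[OF T1(1,2)] by blast
    have "T \<subseteq> cone hull T2"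
      using T1(3) T2(3) by (meson cone_cone_hull hull_minimal order_trans)
    then show ?case
      using T2(1,2) by (auto simp: add.assoc)
  qed
  then show ?thesis
    using bs(2) by blast
qed

lemma outer_in_cone_gen_image:
  assumes "v \<in> cone hull S"
  shows "outer v \<in> cone_gen (outer ` S)"
proof -
  obtain c b where "b \<in> S" "v = c *\<^sub>R b"
    using assms by (auto simp: cone_hull_expl)
  then show ?thesis
    using convex_cone_scaleR[OF convex_cone_cone_gen, of "c\<^sup>2" "outer b"]
    by (simp add: outer_scaleR cone_gen_inc)
qed

context
  fixes A :: "real^'n^'n" and S :: "(real^'n) set"
  assumes rep: "is_CP_rep A S" and unique: "\<forall>T. is_CP_rep A T \<longrightarrow> T = S"
begin

lemma unique_CP_rep_ray:
  assumes "nonneg_vec u" "u \<noteq> 0" "A - outer u \<in> CP_cone"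
  shows "u \<in> cone hull S"
proof -
  have "is_CP_rep (outer u) {u}"
    using assms(1) by (simp add: is_CP_rep_def)
  then obtain T where "is_CP_rep (outer u + (A - outer u)) T" "{u} \<subseteq> cone hull T"
    using CP_rep_add_CP_cone[OF _ _ assms(3)] assms(2) by blast
  with unique show ?thesis
    by auto
qed

lemma unique_CP_rep_below:
  assumes "X \<in> CP_cone" "A - X \<in> CP_cone"
  shows "X \<in> cone_gen (outer ` S)"
proof -
  obtain k :: nat and xs where xs: "\<forall>i<k. nonneg_vec (xs i)" "X = (\<Sum>i<k. outer (xs i))"
    using assms(1) by (rule CP_coneE)
  have "outer (xs i) \<in> cone_gen (outer ` S)" if "i < k" for i
  proof (cases "xs i = 0")
    case True
    then show ?thesis
      by (simp add: convex_cone_contains_0[OF convex_cone_cone_gen])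
  next
    case False
    have "X - outer (xs i) = (\<Sum>j\<in>{..<k} - {i}. outer (xs j))"
      using xs(2) that by (simp add: sum_diff1)
    then have "A - outer (xs i) = (\<Sum>j\<in>{..<k} - {i}. outer (xs j)) + (A - X)"
      by (simp add: algebra_simps)
    also have "\<dots> \<in> CP_cone"
      using xs(1) assms(2)
      by (auto intro!: convex_cone_add[OF convex_cone_CP_cone] convex_cone_sum[OF convex_cone_CP_cone]
          outer_in_CP_cone)
    finally show ?thesis
      using unique_CP_rep_ray xs(1) that False outer_in_cone_gen_image by blast
  qed
  then show ?thesis
    using xs(2) by (auto intro: convex_cone_sum[OF convex_cone_cone_gen])
qed

lemma unique_CP_rep_face_absorbs:
  assumes X: "X \<in> CP_cone" and Y: "Y \<in> CP_cone" and XY: "X + Y \<in> cone_gen (outer ` S)"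
  shows "X \<in> cone_gen (outer ` S)"
proof -
  have fin: "finite S" and A: "A = (\<Sum>b\<in>S. outer b)" and nonneg: "\<forall>b\<in>S. nonneg_vec b"
    using rep by (auto simp: is_CP_rep_def)
  obtain d where d: "\<forall>b\<in>S. 0 \<le> d b" "X + Y = (\<Sum>b\<in>S. d b *\<^sub>R outer b)"
    using cone_gen_image_finiteE[OF fin XY] by blast
  define m where "m = 1 + (\<Sum>b\<in>S. d b)"
  have "m > 0"
    using d(1) by (simp add: m_def add_pos_nonneg sum_nonneg)
  have "d b \<le> m" if "b \<in> S" for b
    using member_le_sum[of b S d] d(1) fin that by (simp add: m_def)
  have "(1 / m) *\<^sub>R (X + Y) = (\<Sum>b\<in>S. (d b / m) *\<^sub>R outer b)"
    unfolding d(2) by (simp add: scaleR_sum_right)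
  moreover have "A - (\<Sum>b\<in>S. (d b / m) *\<^sub>R outer b) = (\<Sum>b\<in>S. (1 - d b / m) *\<^sub>R outer b)"
    by (simp add: A scaleR_diff_left sum_subtractf)
  ultimately have "A - (1 / m) *\<^sub>R X = (1 / m) *\<^sub>R Y + (\<Sum>b\<in>S. (1 - d b / m) *\<^sub>R outer b)"
    by (simp add: algebra_simps)
  also have "\<dots> \<in> CP_cone"
  proof (rule convex_cone_add[OF convex_cone_CP_cone])
    show "(1 / m) *\<^sub>R Y \<in> CP_cone"
      using Y \<open>m > 0\<close> by (simp add: convex_cone_scaleR[OF convex_cone_CP_cone])
    show "(\<Sum>b\<in>S. (1 - d b / m) *\<^sub>R outer b) \<in> CP_cone"
      using \<open>m > 0\<close> \<open>\<And>b. b \<in> S \<Longrightarrow> d b \<le> m\<close> nonneg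
      by (auto intro!: convex_cone_sum[OF convex_cone_CP_cone] convex_cone_scaleR[OF convex_cone_CP_cone]
          outer_in_CP_cone)
  qed
  finally have "(1 / m) *\<^sub>R X \<in> cone_gen (outer ` S)"
    using unique_CP_rep_below X \<open>m > 0\<close> by (simp add: convex_cone_scaleR[OF convex_cone_CP_cone])
  moreover have "X = m *\<^sub>R ((1 / m) *\<^sub>R X)"
    using \<open>m > 0\<close> by simp
  ultimately show ?thesis
    using \<open>m > 0\<close> convex_cone_scaleR[OF convex_cone_cone_gen] by (metis less_imp_le)
qed

lemma unique_CP_rep_cone_face: "cone_face (cone_gen (outer ` S)) CP_cone"
  unfolding cone_face_def
proof (intro conjI ballI impI)
  show "cone_gen (outer ` S) \<subseteq> CP_cone"
    using rep by (intro cone_gen_subset convex_cone_CP_cone) (auto simp: is_CP_rep_def outer_in_CP_cone)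
  show "convex_cone (cone_gen (outer ` S))"
    by (rule convex_cone_cone_gen)
  fix X Y assume "X \<in> CP_cone" "Y \<in> CP_cone" "X + Y \<in> cone_gen (outer ` S)"
  then show "X \<in> cone_gen (outer ` S)" "Y \<in> cone_gen (outer ` S)"
    using unique_CP_rep_face_absorbs[of X Y] unique_CP_rep_face_absorbs[of Y X]
    by (simp_all add: add.commute)
qed

end

lemma cone_face_summand:
  assumes "cone_face F K" "convex_cone K" "finite I" "\<forall>i\<in>I. f i \<in> K" "sum f I \<in> F" "i \<in> I"
  shows "f i \<in> F"
proof -
  have "sum f I = f i + sum f (I - {i})"
    using assms(3,6) by (simp add: sum.remove)
  moreover have "sum f (I - {i}) \<in> K"
    using assms(4) by (auto intro: convex_cone_sum[OF assms(2)])
  ultimately show ?thesis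
    using assms(1,4-6) unfolding cone_face_def by metis
qed

lemma CP_rep_cone_gen_subset_face:
  assumes "is_CP_rep A S" "cone_face F CP_cone" "A \<in> F"
  shows "cone_gen (outer ` S) \<subseteq> F"
proof (rule cone_gen_subset)
  show "convex_cone F"
    using assms(2) by (simp add: cone_face_def)
  show "outer ` S \<subseteq> F"
    using assms by (auto simp: is_CP_rep_def
        intro: cone_face_summand[OF assms(2) convex_cone_CP_cone] outer_in_CP_cone)
qed

theorem corollary5p2:
  fixes A :: "real^'n^'n" and S :: "(real^'n) set"
  assumes "A \<in> CP_cone"
    and "is_CP_rep A S"
    and "\<forall>T. is_CP_rep A T \<longrightarrow> T = S"
  shows "minimal_face CP_cone A = cone_gen (outer ` S)"
proof -
  have "A \<in> cone_gen (outer ` S)"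
    using assms(2) by (auto simp: is_CP_rep_def intro: convex_cone_sum[OF convex_cone_cone_gen] cone_gen_inc)
  moreover have "cone_face (cone_gen (outer ` S)) CP_cone"
    using unique_CP_rep_cone_face[OF assms(2,3)] .
  moreover have "cone_gen (outer ` S) \<subseteq> F" if "cone_face F CP_cone" "A \<in> F" for F
    using CP_rep_cone_gen_subset_face[OF assms(2) that] .
  ultimately show ?thesis
    unfolding minimal_face_def by blast
qed

end
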